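(* Let $1\le t\le n$ and let $M_t$ be the real matrix with rows and columns indexed by the nonempty subsets of $[n]$ of size at most $t$, ordered by nondecreasing size, with $M_t[a,b]=2^{|a\cap b|}$. For $0\le i\le t-1$ let $M_t^{(i)}$ denote the Schur complement $M_t/M_i$ of the upper-left principal submatrix $M_i$ (indexed by the sets of size at most $i$), with $M_t^{(0)}=M_t$; its rows and columns are indexed by the subsets $a\subseteq[n]$ with $i<|a|\le t$. Then for all such $a,b$, $$M_t^{(i)}[a,b]=f^{(i+1)}(|a\cap b|)+u^{(i)}(|a|,|b|),$$ where $f^{(i)}(x)=\sum_{k=i}^x\binom xk=2^x-\sum_{k=0}^{i-1}\binom xk$, $u^{(i)}(w,w')=\binom{w-1}{i}\binom{w'-1}{i}/\alpha_i$, and $\alpha_i=\sum_{k=0}^i\binom nk$.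
   Context: For a block matrix $\begin{pmatrix}A&B\\ C&D'\end{pmatrix}$ with $A$ invertible, the Schur complement of $A$ is $D'-CA^{-1}B$. (For $1\le i$, the submatrix $M_i$ is invertible.) *)

theory Defs
  imports Complex_Main
begin

text \<open>Matrices are represented as real-valued functions of two indices,
  together with an explicit finite index set.  The ordering of rows and columns
  is irrelevant for the entries of a Schur complement.\<close>

definition idx :: "nat \<Rightarrow> nat \<Rightarrow> nat \<Rightarrow> nat set set" where
  "idx n lo hi = {a. a \<subseteq> {1..n} \<and> lo < card a \<and> card a \<le> hi}"

text \<open>The entries of M_t (and of all its principal submatrices M_i).\<close>
definition Mentry :: "nat set \<Rightarrow> nat set \<Rightarrow> real" where
  "Mentry a b = 2 ^ card (a \<inter> b)"

definition inv_on :: "'a set \<Rightarrow> ('a \<Rightarrow> 'a \<Rightarrow> real) \<Rightarrow> ('a \<Rightarrow> 'a \<Rightarrow> real)" where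
  "inv_on I A = (THE B. (\<forall>x\<in>I. \<forall>y\<in>I. (\<Sum>z\<in>I. A x z * B z y) = (if x = y then 1 else 0))
                      \<and> (\<forall>x y. (x \<notin> I \<or> y \<notin> I) \<longrightarrow> B x y = 0))"

text \<open>Schur complement of the principal block indexed by I in the matrix A:
  entry (a,b) of D' - C A_I^{-1} B, for a, b outside I.  For I = {} it is A itself.\<close>
definition schur :: "'a set \<Rightarrow> ('a \<Rightarrow> 'a \<Rightarrow> real) \<Rightarrow> 'a \<Rightarrow> 'a \<Rightarrow> real" where
  "schur I A a b = A a b - (\<Sum>c\<in>I. \<Sum>d\<in>I. A a c * inv_on I A c d * A d b)"

definition f :: "nat \<Rightarrow> nat \<Rightarrow> real" where
  "f i x = (\<Sum>k=i..x. real (x choose k))"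

definition alpha :: "nat \<Rightarrow> nat \<Rightarrow> real" where
  "alpha n i = (\<Sum>k=0..i. real (n choose k))"

definition u :: "nat \<Rightarrow> nat \<Rightarrow> nat \<Rightarrow> nat \<Rightarrow> real" where
  "u n i w w' = real ((w - 1) choose i) * real ((w' - 1) choose i) / alpha n i"

end

(*
  Let Z be the zeta matrix Z[x, e] = [e \<subseteq> x], with e ranging over the index set I of M_i
  (the nonempty subsets of [n] of size at most i).  Since I is closed under nonempty subsets,
  2^|x \<inter> c| = 1 + (Z Z^T)[x, c] for every x and every c in I, so the block M_i equals
  J + Z Z^T = Z (1 + v v^T) Z^T, where v = Z^-1 1 and Z^-1 is the Moebius matrix of I.
  Sherman-Morrison inverts 1 + v v^T, which gives M_i^-1 and hence every Schur complement entry
  in closed form.  The remaining quantities are binomial sums: v_e = -(-1)^|e|, so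
  1 + |v|^2 = alpha_i, and 1 - <Z[x,-], v> is the alternating partial sum
  (-1)^i C(|x| - 1, i); the rest of 2^|a \<inter> b| is f^(i+1)(|a \<inter> b|).
*)
theory Submission
  imports Defs
begin

lemma alternating_binomial_partial_sum:
  assumes "0 < m"
  shows "(\<Sum>k=0..i. (-1) ^ k * real (m choose k)) = (-1) ^ i * real ((m - 1) choose i)"
proof -
  have "(\<Sum>k=0..i. (-1) ^ k * real (m choose k)) = (\<Sum>k\<le>i. (real m gchoose k) * (-1) ^ k)"
    by (simp add: atLeast0AtMost binomial_gbinomial mult.commute)
  also have "\<dots> = (-1) ^ i * (real m - 1 gchoose i)"
    by (rule gbinomial_sum_lower_neg)
  also have "real m - 1 = real (m - 1)"
    using assms by simp
  finally show ?thesis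
    by (simp only: binomial_gbinomial)
qed

lemma power_two_split_binomial:
  "(2::real) ^ m = (\<Sum>k=0..i. real (m choose k)) + f (i + 1) m"
proof -
  have "(2::real) ^ m = (\<Sum>k\<le>m. real (m choose k))"
    by (simp flip: of_nat_sum add: choose_row_sum)
  also have "\<dots> = (\<Sum>k=0..max i m. real (m choose k))"
    by (rule sum.mono_neutral_left) auto
  also have "{0..max i m} = {0..i} \<union> {i + 1..m}"
    by auto
  also have "(\<Sum>k\<in>{0..i} \<union> {i + 1..m}. real (m choose k)) = (\<Sum>k=0..i. real (m choose k)) + f (i + 1) m"
    unfolding f_def by (rule sum.union_disjoint) auto
  finally show ?thesis .
qed

lemma inv_on_eqI:
  fixes A B L :: "'a \<Rightarrow> 'a \<Rightarrow> real"
  assumes "finite I"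
    and right: "\<And>x y. x \<in> I \<Longrightarrow> y \<in> I \<Longrightarrow> (\<Sum>z\<in>I. A x z * B z y) = (if x = y then 1 else 0)"
    and left: "\<And>x y. x \<in> I \<Longrightarrow> y \<in> I \<Longrightarrow> (\<Sum>z\<in>I. L x z * A z y) = (if x = y then 1 else 0)"
    and outside: "\<And>x y. x \<notin> I \<or> y \<notin> I \<Longrightarrow> B x y = 0"
  shows "inv_on I A = B"
proof -
  have left_eq: "B' x y = L x y"
    if right': "\<forall>x\<in>I. \<forall>y\<in>I. (\<Sum>z\<in>I. A x z * B' z y) = (if x = y then 1 else 0)"
      and "x \<in> I" "y \<in> I" for B' x y
  proof -
    have "B' x y = (\<Sum>w\<in>I. (if x = w then 1 else 0) * B' w y)"
      using \<open>finite I\<close> \<open>x \<in> I\<close> by (simp add: if_distrib[where f="\<lambda>a. a * _"] cong: if_cong)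
    also have "\<dots> = (\<Sum>w\<in>I. \<Sum>z\<in>I. L x z * A z w * B' w y)"
      using left \<open>x \<in> I\<close> by (intro sum.cong) (simp_all flip: sum_distrib_right)
    also have "\<dots> = (\<Sum>z\<in>I. L x z * (\<Sum>w\<in>I. A z w * B' w y))"
      by (subst sum.swap) (simp add: sum_distrib_left mult.assoc)
    also have "\<dots> = L x y"
      using right' \<open>finite I\<close> \<open>y \<in> I\<close> by (simp add: if_distrib[where f="\<lambda>a. _ * a"] cong: if_cong)
    finally show ?thesis .
  qed
  show ?thesis
    unfolding inv_on_def
  proof (rule the_equality)
    fix B' assume B': "(\<forall>x\<in>I. \<forall>y\<in>I. (\<Sum>z\<in>I. A x z * B' z y) = (if x = y then 1 else 0))
      \<and> (\<forall>x y. x \<notin> I \<or> y \<notin> I \<longrightarrow> B' x y = 0)"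
    show "B' = B"
    proof (intro ext)
      fix x y show "B' x y = B x y"
        using B' right outside left_eq[of B' x y] left_eq[of B x y] by (cases "x \<in> I \<and> y \<in> I") auto
    qed
  qed (use right outside in auto)
qed

locale ones_plus_gram =
  fixes I :: "'a set" and W V A :: "'a \<Rightarrow> 'a \<Rightarrow> real"
  assumes finite_I: "finite I"
    and W_V: "\<And>c d. c \<in> I \<Longrightarrow> d \<in> I \<Longrightarrow> (\<Sum>e\<in>I. W c e * V e d) = (if c = d then 1 else 0)"
    and V_W: "\<And>c d. c \<in> I \<Longrightarrow> d \<in> I \<Longrightarrow> (\<Sum>e\<in>I. V c e * W e d) = (if c = d then 1 else 0)"
    and A_sym: "\<And>x y. A x y = A y x"
    and A_eq: "\<And>x c. c \<in> I \<Longrightarrow> A x c = 1 + (\<Sum>e\<in>I. W x e * W c e)"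
begin

definition v :: "'a \<Rightarrow> real" where
  "v e = (\<Sum>d\<in>I. V e d)"

definition \<alpha> :: real where
  "\<alpha> = 1 + (\<Sum>e\<in>I. v e * v e)"

definition \<rho> :: "'a \<Rightarrow> real" where
  "\<rho> x = (\<Sum>e\<in>I. W x e * v e)"

(* On I we have A = W (1 + v v^T) W^T, so by Sherman-Morrison its inverse is
   G = V^T K V with K = (1 + v v^T)^-1 = 1 - v v^T / alpha. *)
definition K :: "'a \<Rightarrow> 'a \<Rightarrow> real" where
  "K e e' = (if e = e' then 1 else 0) - v e * v e' / \<alpha>"

definition G :: "'a \<Rightarrow> 'a \<Rightarrow> real" where
  "G c d = (\<Sum>e\<in>I. \<Sum>e'\<in>I. V e c * K e e' * V e' d)"

lemma alpha_pos: "\<alpha> > 0"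
proof -
  have "(\<Sum>e\<in>I. v e * v e) \<ge> 0"
    by (intro sum_nonneg) simp
  then show ?thesis
    unfolding \<alpha>_def by linarith
qed

lemma rho_eq_1: "c \<in> I \<Longrightarrow> \<rho> c = 1"
  unfolding \<rho>_def v_def sum_distrib_left
  by (subst sum.swap) (simp add: W_V finite_I)

lemma sum_A_V: "e \<in> I \<Longrightarrow> (\<Sum>c\<in>I. A x c * V e c) = v e + W x e"
proof -
  assume e: "e \<in> I"
  have "(\<Sum>c\<in>I. A x c * V e c) = (\<Sum>c\<in>I. V e c + (\<Sum>f\<in>I. W x f * (V e c * W c f)))"
    using A_eq by (intro sum.cong) (simp_all add: algebra_simps sum_distrib_left sum_distrib_right)
  also have "\<dots> = v e + (\<Sum>f\<in>I. W x f * (\<Sum>c\<in>I. V e c * W c f))"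
    unfolding v_def sum.distrib sum_distrib_left by (subst (2) sum.swap) rule
  also have "\<dots> = v e + W x e"
    using e by (simp add: V_W finite_I if_distrib[where f="\<lambda>a. _ * a"] cong: if_cong)
  finally show ?thesis .
qed

lemma sum_mult_K: "e' \<in> I \<Longrightarrow> (\<Sum>e\<in>I. p e * K e e') = p e' - (\<Sum>e\<in>I. v e * p e) * v e' / \<alpha>"
  unfolding K_def right_diff_distrib sum_subtractf
  by (simp add: if_distrib[where f="\<lambda>a. _ * a"] finite_I sum_distrib_left ac_simps
      flip: sum_divide_distrib cong: if_cong)

lemma K_sym: "K e e' = K e' e"
  unfolding K_def by (simp add: eq_commute mult.commute)

lemma sum_mult_G:
  "(\<Sum>c\<in>I. P c * G c d) = (\<Sum>e'\<in>I. (\<Sum>e\<in>I. (\<Sum>c\<in>I. P c * V e c) * K e e') * V e' d)"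
proof -
  have "(\<Sum>c\<in>I. P c * G c d) = (\<Sum>c\<in>I. \<Sum>e\<in>I. \<Sum>e'\<in>I. P c * V e c * K e e' * V e' d)"
    unfolding G_def sum_distrib_left by (simp add: ac_simps)
  also have "\<dots> = (\<Sum>e'\<in>I. \<Sum>e\<in>I. \<Sum>c\<in>I. P c * V e c * K e e' * V e' d)"
    by (subst sum.swap, subst (2) sum.swap, subst sum.swap) (rule refl)
  finally show ?thesis
    by (simp add: sum_distrib_right)
qed

lemma sum_v_mult_v_plus_W: "(\<Sum>e\<in>I. v e * (v e + W x e)) = \<alpha> - 1 + \<rho> x"
  unfolding \<alpha>_def \<rho>_def by (simp add: distrib_left sum.distrib mult.commute)

lemma sum_A_V_K:
  "e' \<in> I \<Longrightarrow> (\<Sum>e\<in>I. (\<Sum>c\<in>I. A x c * V e c) * K e e')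
     = v e' + W x e' - (\<alpha> - 1 + \<rho> x) * v e' / \<alpha>"
  by (simp add: sum_A_V sum_mult_K sum_v_mult_v_plus_W cong: sum.cong)

lemma A_G_right_inverse:
  assumes "c \<in> I" "d \<in> I"
  shows "(\<Sum>c'\<in>I. A c c' * G c' d) = (if c = d then 1 else 0)"
proof -
  have "(\<Sum>e\<in>I. (\<Sum>c'\<in>I. A c c' * V e c') * K e e') = W c e'" if "e' \<in> I" for e'
    using that alpha_pos by (simp add: sum_A_V_K rho_eq_1[OF \<open>c \<in> I\<close>])
  then show ?thesis
    by (simp add: sum_mult_G W_V assms cong: sum.cong)
qed

lemma G_sym: "G c d = G d c"
  unfolding G_def by (subst sum.swap) (simp add: K_sym ac_simps)

lemma G_A_left_inverse:
  "c \<in> I \<Longrightarrow> d \<in> I \<Longrightarrow> (\<Sum>c'\<in>I. G c c' * A c' d) = (if c = d then 1 else 0)"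
  using A_G_right_inverse[of d c] by (simp add: G_sym A_sym mult.commute eq_commute)

lemma inv_on_eq: "inv_on I A = (\<lambda>c d. if c \<in> I \<and> d \<in> I then G c d else 0)"
  by (rule inv_on_eqI[where L = G]) (auto simp: finite_I A_G_right_inverse G_A_left_inverse cong: sum.cong)

lemma schur_eq:
  "schur I A x y = A x y - 1 - (\<Sum>e\<in>I. W x e * W y e) + (1 - \<rho> x) * (1 - \<rho> y) / \<alpha>"
proof -
  have "(\<Sum>c\<in>I. \<Sum>d\<in>I. A x c * inv_on I A c d * A d y) = (\<Sum>d\<in>I. (\<Sum>c\<in>I. A x c * G c d) * A d y)"
    unfolding inv_on_eq by (subst sum.swap) (simp add: sum_distrib_right cong: sum.cong)
  also have "\<dots> = (\<Sum>d\<in>I. (\<Sum>e'\<in>I. (v e' + W x e' - (\<alpha> - 1 + \<rho> x) * v e' / \<alpha>) * V e' d) * A d y)"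
    by (simp add: sum_mult_G sum_A_V_K cong: sum.cong)
  also have "\<dots> = (\<Sum>e'\<in>I. (v e' + W x e' - (\<alpha> - 1 + \<rho> x) * v e' / \<alpha>) * (\<Sum>d\<in>I. A y d * V e' d))"
    unfolding sum_distrib_left sum_distrib_right by (subst sum.swap) (simp add: A_sym[of _ y] ac_simps)
  also have "\<dots> = (\<Sum>e'\<in>I. (v e' + W x e' - (\<alpha> - 1 + \<rho> x) / \<alpha> * v e') * (v e' + W y e'))"
    by (simp add: sum_A_V cong: sum.cong)
  also have "\<dots> = (\<Sum>e'\<in>I. (v e' + W x e') * (v e' + W y e'))
      - (\<alpha> - 1 + \<rho> x) / \<alpha> * (\<Sum>e'\<in>I. v e' * (v e' + W y e'))"
    by (simp add: left_diff_distrib sum_subtractf sum_distrib_left mult.assoc)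
  also have "(\<Sum>e'\<in>I. (v e' + W x e') * (v e' + W y e')) = \<alpha> - 1 + \<rho> x + \<rho> y + (\<Sum>e\<in>I. W x e * W y e)"
    unfolding \<alpha>_def \<rho>_def by (simp add: algebra_simps sum.distrib)
  finally show ?thesis
    unfolding schur_def sum_v_mult_v_plus_W using alpha_pos by (simp add: field_simps)
qed

end

definition zeta :: "'a set \<Rightarrow> 'a set \<Rightarrow> real" where
  "zeta x e = (if e \<subseteq> x then 1 else 0)"

definition moebius :: "'a set \<Rightarrow> 'a set \<Rightarrow> real" where
  "moebius e d = (if d \<subseteq> e then (-1) ^ (card e - card d) else 0)"

lemma zeta_mult: "zeta x e * r = (if e \<subseteq> x then r else 0)"
  by (simp add: zeta_def)

lemma zeta_Int: "zeta (x \<inter> y) e = zeta x e * zeta y e"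
  by (simp add: zeta_def)

lemma minus_one_power_card_diff:
  "finite c \<Longrightarrow> d \<subseteq> c \<Longrightarrow> (-1::real) ^ (card c - card d) = (-1) ^ card c * (-1) ^ card d"
  using neg_one_power_add_eq_neg_one_power_diff[of "card d" "card c"] card_mono[of c d]
  by (metis power_add)

lemma sum_minus_one_power_card_interval:
  assumes "finite c"
  shows "(\<Sum>e | d \<subseteq> e \<and> e \<subseteq> c. (-1::real) ^ card e) = (if c = d then (-1) ^ card c else 0)"
proof (cases "d \<subset> c")
  case True
  have "finite {e. d \<subseteq> e \<and> e \<subseteq> c}"
    using assms by (auto intro: finite_subset[of _ "Pow c"])
  moreover have "card {e \<in> {e. d \<subseteq> e \<and> e \<subseteq> c}. even (card e)} = card {e \<in> {e. d \<subseteq> e \<and> e \<subseteq> c}. odd (card e)}"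
    using card_subsupersets_even_odd[OF assms True] by (simp add: conj_commute conj_left_commute)
  ultimately show ?thesis
    using True by (simp add: sum_alternating_cancels)
next
  case False
  then have "{e. d \<subseteq> e \<and> e \<subseteq> c} = (if c = d then {c} else {})"
    by auto
  then show ?thesis
    by simp
qed

lemma finite_idx: "finite (idx n lo hi)"
  unfolding idx_def by (rule finite_subset[of _ "Pow {1..n}"]) auto

lemma idx0_memD:
  assumes "c \<in> idx n 0 i"
  shows "finite c" "c \<noteq> {}" "c \<subseteq> {1..n}" "card c \<le> i"
  using assms unfolding idx_def by (auto intro: finite_subset)

lemma idx0_subset_closed: "c \<in> idx n 0 i \<Longrightarrow> d \<noteq> {} \<Longrightarrow> d \<subseteq> c \<Longrightarrow> d \<in> idx n 0 i"
  unfolding idx_def using card_mono[of c d] by (auto simp: finite_subset card_gt_0_iff)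

lemma sum_idx0_interval:
  assumes "c \<in> idx n 0 i" "d \<in> idx n 0 i"
  shows "(\<Sum>e\<in>idx n 0 i. if d \<subseteq> e \<and> e \<subseteq> c then g e else 0) = (\<Sum>e | d \<subseteq> e \<and> e \<subseteq> c. g e)"
proof -
  have "(\<Sum>e\<in>idx n 0 i. if d \<subseteq> e \<and> e \<subseteq> c then g e else 0)
      = (\<Sum>e\<in>{e \<in> idx n 0 i. d \<subseteq> e \<and> e \<subseteq> c}. g e)"
    by (rule sum.inter_filter[symmetric, OF finite_idx])
  also have "{e \<in> idx n 0 i. d \<subseteq> e \<and> e \<subseteq> c} = {e. d \<subseteq> e \<and> e \<subseteq> c}"
    using idx0_subset_closed[OF assms(1)] idx0_memD[OF assms(2)] by auto
  finally show ?thesis .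
qed

lemma zeta_moebius_inverse:
  assumes "c \<in> idx n 0 i" "d \<in> idx n 0 i"
  shows "(\<Sum>e\<in>idx n 0 i. zeta c e * moebius e d) = (if c = d then 1 else 0)"
proof -
  have "finite c"
    using idx0_memD[OF assms(1)] by blast
  then have "(\<Sum>e\<in>idx n 0 i. zeta c e * moebius e d)
      = (\<Sum>e\<in>idx n 0 i. if d \<subseteq> e \<and> e \<subseteq> c then (-1) ^ card d * (-1) ^ card e else 0)"
    by (intro sum.cong) (auto simp: zeta_def moebius_def minus_one_power_card_diff finite_subset)
  also have "\<dots> = (-1) ^ card d * (\<Sum>e | d \<subseteq> e \<and> e \<subseteq> c. (-1) ^ card e)"
    by (simp add: sum_idx0_interval assms sum_distrib_left)
  finally show ?thesis
    using \<open>finite c\<close> by (simp add: sum_minus_one_power_card_interval flip: power_add)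
qed

lemma moebius_zeta_inverse:
  assumes "c \<in> idx n 0 i" "d \<in> idx n 0 i"
  shows "(\<Sum>e\<in>idx n 0 i. moebius c e * zeta e d) = (if c = d then 1 else 0)"
proof -
  have "finite c"
    using idx0_memD[OF assms(1)] by blast
  then have "(\<Sum>e\<in>idx n 0 i. moebius c e * zeta e d)
      = (\<Sum>e\<in>idx n 0 i. if d \<subseteq> e \<and> e \<subseteq> c then (-1) ^ card c * (-1) ^ card e else 0)"
    by (intro sum.cong) (auto simp: zeta_def moebius_def minus_one_power_card_diff)
  also have "\<dots> = (-1) ^ card c * (\<Sum>e | d \<subseteq> e \<and> e \<subseteq> c. (-1) ^ card e)"
    by (simp add: sum_idx0_interval assms sum_distrib_left)
  finally show ?thesis
    using \<open>finite c\<close> by (simp add: sum_minus_one_power_card_interval flip: power_add)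
qed

lemma sum_moebius_row:
  assumes "e \<in> idx n 0 i"
  shows "(\<Sum>d\<in>idx n 0 i. moebius e d) = - ((-1) ^ card e)"
proof -
  have e: "finite e" "e \<noteq> {}"
    using idx0_memD[OF assms] by auto
  have "(\<Sum>d\<in>idx n 0 i. moebius e d) = (\<Sum>d\<in>{d \<in> idx n 0 i. d \<subseteq> e}. (-1) ^ (card e - card d))"
    unfolding moebius_def by (rule sum.inter_filter[symmetric, OF finite_idx])
  also have "{d \<in> idx n 0 i. d \<subseteq> e} = Pow e - {{}}"
    using idx0_subset_closed[OF assms] by (auto dest: idx0_memD(2))
  also have "(\<Sum>d\<in>Pow e - {{}}. (-1::real) ^ (card e - card d)) = (\<Sum>d\<in>Pow e - {{}}. (-1) ^ card e * (-1) ^ card d)"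
    using e by (intro sum.cong refl) (simp add: minus_one_power_card_diff)
  also have "\<dots> = (-1) ^ card e * ((\<Sum>d | {} \<subseteq> d \<and> d \<subseteq> e. (-1) ^ card d) - 1)"
    using e by (simp add: sum_diff1 sum_distrib_left[symmetric] Pow_def)
  finally show ?thesis
    using e sum_minus_one_power_card_interval[OF \<open>finite e\<close>, of "{}"] by simp
qed

lemma Mentry_eq_one_plus_zeta:
  assumes "c \<in> idx n 0 i"
  shows "Mentry x c = 1 + (\<Sum>e\<in>idx n 0 i. zeta x e * zeta c e)"
proof -
  have "finite (x \<inter> c)"
    using idx0_memD[OF assms] by simp
  have "(\<Sum>e\<in>idx n 0 i. zeta x e * zeta c e) = (\<Sum>e\<in>idx n 0 i. zeta (x \<inter> c) e * 1)"
    by (simp add: zeta_Int)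
  also have "\<dots> = card {e \<in> idx n 0 i. e \<subseteq> x \<inter> c}"
    by (simp only: zeta_mult sum.inter_filter[symmetric] finite_idx) simp
  also have "{e \<in> idx n 0 i. e \<subseteq> x \<inter> c} = Pow (x \<inter> c) - {{}}"
    using idx0_subset_closed[OF assms] by (auto dest: idx0_memD(2))
  also have "card (Pow (x \<inter> c) - {{}}) = 2 ^ card (x \<inter> c) - 1"
    using \<open>finite (x \<inter> c)\<close> by (simp add: card_Pow card_Diff_singleton del: Pow_Int_eq)
  finally show ?thesis
    by (simp add: Mentry_def)
qed

lemma sum_zeta_card:
  assumes "X \<subseteq> {1..n}"
  shows "(\<Sum>e\<in>idx n 0 i. zeta X e * g (card e)) = (\<Sum>k=1..i. real (card X choose k) * g k)"
proof -
  have "finite X"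
    using assms by (rule finite_subset) simp
  let ?S = "\<lambda>k. {e. e \<subseteq> X \<and> card e = k}"
  have "(\<Sum>e\<in>idx n 0 i. zeta X e * g (card e)) = (\<Sum>e\<in>{e \<in> idx n 0 i. e \<subseteq> X}. g (card e))"
    by (simp add: zeta_mult sum.inter_filter[symmetric] finite_idx)
  also have "{e \<in> idx n 0 i. e \<subseteq> X} = (\<Union>k\<in>{1..i}. ?S k)"
    using assms unfolding idx_def by auto
  also have "(\<Sum>e\<in>(\<Union>k\<in>{1..i}. ?S k). g (card e)) = (\<Sum>k=1..i. \<Sum>e\<in>?S k. g (card e))"
    using \<open>finite X\<close> by (intro sum.UNION_disjoint) (auto intro: finite_subset[of _ "Pow X"])
  also have "\<dots> = (\<Sum>k=1..i. real (card X choose k) * g k)"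
    using n_subsets[OF \<open>finite X\<close>] by simp
  finally show ?thesis .
qed

interpretation subset_gram: ones_plus_gram "idx n 0 i" zeta moebius Mentry for n i
  by unfold_locales (simp_all add: finite_idx zeta_moebius_inverse moebius_zeta_inverse
      Mentry_eq_one_plus_zeta, simp add: Mentry_def Int_commute)

lemma subset_gram_v: "e \<in> idx n 0 i \<Longrightarrow> subset_gram.v n i e = - ((-1) ^ card e)"
  unfolding subset_gram.v_def by (rule sum_moebius_row)

lemma subset_gram_alpha: "subset_gram.\<alpha> n i = alpha n i"
proof -
  have "(\<Sum>e\<in>idx n 0 i. subset_gram.v n i e * subset_gram.v n i e)
      = (\<Sum>e\<in>idx n 0 i. zeta {1..n} e * 1)"
  proof (intro sum.cong refl)
    fix e assume "e \<in> idx n 0 i"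
    then show "subset_gram.v n i e * subset_gram.v n i e = zeta {1..n} e * 1"
      using idx0_memD(3) by (simp add: subset_gram_v zeta_def flip: power_add)
  qed
  also have "\<dots> = (\<Sum>k=1..i. real (n choose k))"
    using sum_zeta_card[where X = "{1..n}" and g = "\<lambda>_. 1"] by simp
  finally show ?thesis
    unfolding subset_gram.\<alpha>_def alpha_def by (simp add: sum.atLeast_Suc_atMost)
qed

lemma one_minus_subset_gram_rho:
  assumes "x \<subseteq> {1..n}" "i < card x"
  shows "1 - subset_gram.\<rho> n i x = (-1) ^ i * real ((card x - 1) choose i)"
proof -
  have "subset_gram.\<rho> n i x = (\<Sum>e\<in>idx n 0 i. zeta x e * - ((-1) ^ card e))"
    unfolding subset_gram.\<rho>_def by (simp add: subset_gram_v cong: sum.cong)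
  also have "\<dots> = - (\<Sum>k=1..i. (-1) ^ k * real (card x choose k))"
    using sum_zeta_card[OF assms(1), where g = "\<lambda>k. - ((-1) ^ k)"] by (simp add: sum_negf mult.commute)
  finally have "1 - subset_gram.\<rho> n i x = (\<Sum>k=0..i. (-1) ^ k * real (card x choose k))"
    by (simp add: sum.atLeast_Suc_atMost)
  also have "\<dots> = (-1) ^ i * real ((card x - 1) choose i)"
    using assms(2) by (intro alternating_binomial_partial_sum) simp
  finally show ?thesis .
qed

lemma sum_zeta_zeta:
  assumes "a \<subseteq> {1..n}"
  shows "(\<Sum>e\<in>idx n 0 i. zeta a e * zeta b e) = (\<Sum>k=1..i. real (card (a \<inter> b) choose k))"
proof -
  have "a \<inter> b \<subseteq> {1..n}"
    using assms by blast
  from sum_zeta_card[OF this, where g = "\<lambda>_. 1"] show ?thesis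
    by (simp add: zeta_Int)
qed

theorem lemma9:
  fixes n t i :: nat and a b :: "nat set"
  assumes "1 \<le> t" and "t \<le> n" and "i \<le> t - 1"
    and "a \<in> idx n i t" and "b \<in> idx n i t"
  shows "schur (idx n 0 i) Mentry a b
           = f (i + 1) (card (a \<inter> b)) + u n i (card a) (card b)"
proof -
  have a: "a \<subseteq> {1..n}" "i < card a" and b: "b \<subseteq> {1..n}" "i < card b"
    using assms(4,5) unfolding idx_def by auto
  have "schur (idx n 0 i) Mentry a b
      = Mentry a b - 1 - (\<Sum>k=1..i. real (card (a \<inter> b) choose k))
        + (-1) ^ i * real ((card a - 1) choose i) * ((-1) ^ i * real ((card b - 1) choose i)) / alpha n i"
    unfolding subset_gram.schur_eq sum_zeta_zeta[OF a(1)] one_minus_subset_gram_rho[OF a]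
      one_minus_subset_gram_rho[OF b] subset_gram_alpha ..
  also have "\<dots> = f (i + 1) (card (a \<inter> b)) + u n i (card a) (card b)"
    unfolding Mentry_def power_two_split_binomial[of _ i] u_def
    by (simp add: sum.atLeast_Suc_atMost algebra_simps flip: power_add)
  finally show ?thesis .
qed

end
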